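(* Consider any online scheme for \textsc{Connectivity} or for \textsc{Bipartiteness} of graphs given as streams in the XOR update model on $n$ (more precisely $n+1$) vertices, with help cost $c_a$ and space cost $c_v$. Then $(c_a+n)\cdot c_v=\Omega(n^2)$, even under the promise that the first $m-n$ stream updates are pairwise distinct and the last $n$ updates are all incident to a single vertex. In particular, the total cost $c_a+c_v$ of any such scheme is $\Omega(n)$.
   Context: XOR update model: a stream $\langle e_1,\dots,e_m\rangle$ of undirected vertex pairs defines the graph whose edge set is $\{e: |\{i:e_i=e\}|\text{ odd}\}$. \textsc{Connectivity} (resp. \textsc{Bipartiteness}): decide whether this graph is connected (resp. bipartite). Annotated data streams: a scheme is a pair $(\mathfrak h,V)$ where $\mathfrak h_i$ is the prover's annotation inserted after token $x_i$, and $V$ is a single-pass streaming verifier with private randomness that outputs a value or $\bot$. Online: $\mathfrak h_i$ depends only on $x_1,\dots,x_i$. Completeness: with the honest annotation $V$ outputs $F(\mathbf x)$ with probability $\ge 2/3$; soundness: for every annotation, $V$ outputs a value outside $\{F(\mathbf x),\bot\}$ with probability $\le 1/3$. Help cost $c_a$: maximum total annotation length in bits; space cost $c_v$: bits of memory used by $V$. *)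

theory Defs
  imports "HOL-Probability.Probability"
begin

type_synonym tok = "nat \<times> nat"

text \<open>Vertex set is {0..n} (n+1 vertices); a token is a vertex pair.\<close>
definition valid_tok :: "nat \<Rightarrow> tok \<Rightarrow> bool" where
  "valid_tok n x = (fst x \<noteq> snd x \<and> fst x \<le> n \<and> snd x \<le> n)"

definition tok_edge :: "tok \<Rightarrow> nat set" where
  "tok_edge x = {fst x, snd x}"

definition xor_edges :: "tok list \<Rightarrow> nat set set" where
  "xor_edges xs = {e. odd (length (filter (\<lambda>x. tok_edge x = e) xs))}"

definition connected_xor :: "nat \<Rightarrow> tok list \<Rightarrow> bool" where
  "connected_xor n xs =
     (\<forall>u\<le>n. \<forall>v\<le>n. (u, v) \<in> {(a, b). a \<le> n \<and> b \<le> n \<and> {a, b} \<in> xor_edges xs}\<^sup>*)"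

definition bipartite_xor :: "nat \<Rightarrow> tok list \<Rightarrow> bool" where
  "bipartite_xor n xs =
     (\<exists>c :: nat \<Rightarrow> bool. \<forall>u v. {u, v} \<in> xor_edges xs \<longrightarrow> c u \<noteq> c v)"

definition promise :: "nat \<Rightarrow> tok list \<Rightarrow> bool" where
  "promise n xs =
     ((\<forall>x\<in>set xs. valid_tok n x) \<and> n \<le> length xs \<and>
      distinct (map tok_edge (take (length xs - n) xs)) \<and>
      (\<exists>w\<le>n. \<forall>x\<in>set (drop (length xs - n) xs). w \<in> tok_edge x))"

text \<open>A streaming verifier with private randomness: randomized initial state,
  randomized transitions on each stream token and on each annotation bit, and an
  output map (None = reject/bot).\<close>
record verifier =
  v_init :: "nat pmf"
  v_tok  :: "nat \<Rightarrow> tok \<Rightarrow> nat pmf"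
  v_bit  :: "nat \<Rightarrow> bool \<Rightarrow> nat pmf"
  v_out  :: "nat \<Rightarrow> bool option"

fun read_bits :: "verifier \<Rightarrow> bool list \<Rightarrow> nat \<Rightarrow> nat pmf" where
  "read_bits V [] s = return_pmf s"
| "read_bits V (b # bs) s = bind_pmf (v_bit V s b) (read_bits V bs)"

fun exec :: "verifier \<Rightarrow> (tok \<times> bool list) list \<Rightarrow> nat \<Rightarrow> nat pmf" where
  "exec V [] s = return_pmf s"
| "exec V ((x, a) # rest) s =
     bind_pmf (v_tok V s x) (\<lambda>s'. bind_pmf (read_bits V a s') (exec V rest))"

definition run_out :: "verifier \<Rightarrow> tok list \<Rightarrow> bool list list \<Rightarrow> bool option pmf" where
  "run_out V xs hs = map_pmf (v_out V) (bind_pmf (v_init V) (exec V (zip xs hs)))"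

text \<open>Online honest annotation: h_i is a function of the prefix x_1..x_i only.\<close>
definition honest :: "(tok list \<Rightarrow> bool list) \<Rightarrow> tok list \<Rightarrow> bool list list" where
  "honest h xs = map (\<lambda>i. h (take (Suc i) xs)) [0..<length xs]"

text \<open>(h, V) is an online scheme for F on n+1 vertices (under the promise), with
  help cost ca and space cost cv (V uses a state set S of at most 2^cv states).\<close>
definition online_scheme ::
  "nat \<Rightarrow> (tok list \<Rightarrow> bool) \<Rightarrow> nat set \<Rightarrow> nat \<Rightarrow> nat \<Rightarrow>
   (tok list \<Rightarrow> bool list) \<Rightarrow> verifier \<Rightarrow> bool" where
  "online_scheme n F S cv ca h V =
     (finite S \<and> card S \<le> 2 ^ cv \<and> set_pmf (v_init V) \<subseteq> S \<and>
      (\<forall>s\<in>S. \<forall>x. valid_tok n x \<longrightarrow> set_pmf (v_tok V s x) \<subseteq> S) \<and>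
      (\<forall>s\<in>S. \<forall>b. set_pmf (v_bit V s b) \<subseteq> S) \<and>
      (\<forall>xs. promise n xs \<longrightarrow>
         sum_list (map length (honest h xs)) \<le> ca \<and>
         measure_pmf.prob (run_out V xs (honest h xs)) {Some (F xs)} \<ge> 2/3 \<and>
         (\<forall>hs. length hs = length xs \<longrightarrow>
            measure_pmf.prob (run_out V xs hs) (- {Some (F xs), None}) \<le> 1/3)))"

end

theory Submission
  imports Defs
begin

text \<open>After reading a prefix of the stream together with its honest annotation, the verifier's
  memory is a distribution over its at most \<open>2 ^ c\<^sub>v\<close> states. If a suffix of \<open>n\<close> updates
  gives different answers after two prefixes, then, with the annotation the online prover sends
  for that suffix after the first prefix, the verifier outputs the first answer with probability
  at least \<open>2/3\<close> after the first prefix but at most \<open>1/3\<close> after the second. These acceptance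
  probabilities are indexed by the suffix, one of the \<open>2 ^ O(c\<^sub>a + n)\<close> short annotations and the
  answer; by Hoeffding's inequality a sample of \<open>O(c\<^sub>a + n)\<close> states estimates all of them at
  once, so there are at most \<open>2 ^ O(c\<^sub>v (c\<^sub>a + n))\<close> pairwise distinguishable prefixes.

  The hard prefixes encode an arbitrary bipartite graph between \<open>m \<approx> n/2\<close> left and \<open>m\<close> right
  vertices, plus a star at vertex \<open>0\<close>. The suffix consists of \<open>n\<close> updates at one left vertex
  \<open>i\<close>: it toggles the edges from \<open>i\<close> to a guessed row and the edge \<open>{0, i}\<close>, and the resulting
  graph is connected (for the star to all vertices), resp. non-bipartite (for the star to the
  right side), exactly when the guess was wrong. So \<open>2 ^ (m * m)\<close> prefixes are pairwise
  distinguishable, whence \<open>m\<^sup>2 = O(c\<^sub>v (c\<^sub>a + n))\<close>.\<close>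

section \<open>Estimating many expectations by one sample\<close>

lemma prob_Pi_pmf_sum_deviation_le:
  fixes p :: "'a pmf" and d :: 'a and g :: "'a \<Rightarrow> real" and k :: nat and \<epsilon> :: real
  assumes g: "\<And>s. g s \<in> {0..1}" and "k > 0" and "\<epsilon> \<ge> 0"
  defines "M \<equiv> Pi_pmf {..<k} d (\<lambda>_. p)"
  shows "measure_pmf.prob M
           {f. \<epsilon> \<le> \<bar>(\<Sum>i<k. g (f i)) - real k * measure_pmf.expectation p g\<bar>}
         \<le> 2 * exp (- 2 * \<epsilon>\<^sup>2 / real k)"
proof -
  have "prob_space.indep_vars (measure_pmf M) (\<lambda>_. borel) (\<lambda>i f. g (f i)) {..<k}"
    unfolding M_def
    by (rule prob_space.indep_vars_compose2[OF measure_pmf.prob_space_axioms indep_vars_Pi_pmf])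
      auto
  then interpret Hoeffding_ineq "measure_pmf M" "{..<k}" "\<lambda>i f. g (f i)" "\<lambda>_. 0" "\<lambda>_. 1"
    "\<Sum>i<k. measure_pmf.expectation M (\<lambda>f. g (f i))"
    by unfold_locales (use g in auto)
  have "measure_pmf.expectation M (\<lambda>f. g (f i)) = measure_pmf.expectation p g" if "i < k" for i
  proof -
    have "map_pmf (\<lambda>f. f i) M = p"
      unfolding M_def using that by (subst Pi_pmf_component) auto
    then show ?thesis
      by (metis integral_map_pmf)
  qed
  then have "(\<Sum>i<k. measure_pmf.expectation M (\<lambda>f. g (f i))) = real k * measure_pmf.expectation p g"
    by simp
  then show ?thesis
    using Hoeffding_ineq_abs_ge[of \<epsilon>] assms by simp
qed

lemma exists_sample_close_to_expectations:
  fixes p :: "'a pmf" and G :: "('a \<Rightarrow> real) set" and k :: nat and \<epsilon> :: real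
  assumes "finite G" and "\<And>g s. g \<in> G \<Longrightarrow> g s \<in> {0..1}" and "k > 0" and "\<epsilon> \<ge> 0"
    and small: "2 * real (card G) * exp (- 2 * \<epsilon>\<^sup>2 / real k) < 1"
  shows "\<exists>f. (\<forall>i<k. f i \<in> set_pmf p) \<and>
     (\<forall>g\<in>G. \<bar>(\<Sum>i<k. g (f i)) - real k * measure_pmf.expectation p g\<bar> < \<epsilon>)"
proof -
  obtain d where "d \<in> set_pmf p"
    using set_pmf_not_empty by fastforce
  define M where "M = Pi_pmf {..<k} d (\<lambda>_. p)"
  define bad where
    "bad g = {f. \<epsilon> \<le> \<bar>(\<Sum>i<k. g (f i)) - real k * measure_pmf.expectation p g\<bar>}" for g
  have "measure_pmf.prob M (\<Union>g\<in>G. bad g) \<le> (\<Sum>g\<in>G. measure_pmf.prob M (bad g))"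
    by (rule measure_pmf.finite_measure_subadditive_finite) (use assms in auto)
  also have "\<dots> \<le> (\<Sum>g\<in>G. 2 * exp (- 2 * \<epsilon>\<^sup>2 / real k))"
    unfolding M_def bad_def
    by (intro sum_mono prob_Pi_pmf_sum_deviation_le) (use assms in auto)
  also have "\<dots> < 1"
    using small by simp
  finally have "\<not> set_pmf M \<subseteq> (\<Union>g\<in>G. bad g)"
    using measure_pmf.prob_eq_1[of "\<Union>g\<in>G. bad g" M] by (auto simp: AE_measure_pmf_iff)
  then obtain f where f: "f \<in> set_pmf M" "f \<notin> (\<Union>g\<in>G. bad g)"
    by blast
  have "f i \<in> set_pmf p" if "i < k" for i
    using f(1) that unfolding M_def by (auto simp: set_Pi_pmf PiE_dflt_def)
  with f(2) show ?thesis
    unfolding bad_def by (intro exI[of _ f]) auto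
qed

text \<open>Each distribution is encoded by a sample of \<open>k\<close> states that estimates all tests of \<open>G\<close>
  to within \<open>k \<delta> / 2\<close>; distributions that some test separates by \<open>\<delta>\<close> get different samples.\<close>
lemma card_le_card_pow_if_separated:
  fixes \<mu> :: "'x \<Rightarrow> 'a pmf" and G :: "('a \<Rightarrow> real) set" and k :: nat and \<delta> :: real
  assumes "finite G" and "\<And>g s. g \<in> G \<Longrightarrow> g s \<in> {0..1}" and "k > 0" and "\<delta> \<ge> 0"
    and "2 * real (card G) * exp (- real k * \<delta>\<^sup>2 / 2) < 1"
    and "finite S" and supp: "\<And>x. x \<in> X \<Longrightarrow> set_pmf (\<mu> x) \<subseteq> S"
    and sep: "\<And>x x'. x \<in> X \<Longrightarrow> x' \<in> X \<Longrightarrow> x \<noteq> x' \<Longrightarrow>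
       \<exists>g\<in>G. measure_pmf.expectation (\<mu> x) g - measure_pmf.expectation (\<mu> x') g \<ge> \<delta>"
  shows "card X \<le> card S ^ k"
proof -
  define \<epsilon> where "\<epsilon> = real k * \<delta> / 2"
  have "- 2 * \<epsilon>\<^sup>2 / real k = - real k * \<delta>\<^sup>2 / 2"
    using \<open>k > 0\<close> by (simp add: \<epsilon>_def power2_eq_square field_simps)
  with assms(5) have "2 * real (card G) * exp (- 2 * \<epsilon>\<^sup>2 / real k) < 1"
    by (simp only:)
  then have "\<forall>x\<in>X. \<exists>f. (\<forall>i<k. f i \<in> set_pmf (\<mu> x)) \<and>
     (\<forall>g\<in>G. \<bar>(\<Sum>i<k. g (f i)) - real k * measure_pmf.expectation (\<mu> x) g\<bar> < \<epsilon>)"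
    using exists_sample_close_to_expectations[where G = G and k = k and \<epsilon> = \<epsilon>] assms by (simp add: \<epsilon>_def)
  then obtain smp where smp: "\<And>x. x \<in> X \<Longrightarrow> (\<forall>i<k. smp x i \<in> set_pmf (\<mu> x)) \<and>
     (\<forall>g\<in>G. \<bar>(\<Sum>i<k. g (smp x i)) - real k * measure_pmf.expectation (\<mu> x) g\<bar> < \<epsilon>)"
    by metis
  have "inj_on (\<lambda>x. restrict (smp x) {..<k}) X"
  proof (rule inj_onI, rule ccontr)
    fix x x' assume x: "x \<in> X" "x' \<in> X" and eq: "restrict (smp x) {..<k} = restrict (smp x') {..<k}"
      and "x \<noteq> x'"
    then obtain g where g: "g \<in> G"
      and "\<delta> \<le> measure_pmf.expectation (\<mu> x) g - measure_pmf.expectation (\<mu> x') g"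
      using sep by blast
    then have "real k * \<delta> \<le>
        real k * measure_pmf.expectation (\<mu> x) g - real k * measure_pmf.expectation (\<mu> x') g"
      by (metis mult_left_mono of_nat_0_le_iff right_diff_distrib)
    moreover have "(\<Sum>i<k. g (smp x i)) = (\<Sum>i<k. g (smp x' i))"
    proof (rule sum.cong)
      fix i assume "i \<in> {..<k}"
      then show "g (smp x i) = g (smp x' i)"
        using fun_cong[OF eq, of i] by simp
    qed simp
    moreover have "\<bar>(\<Sum>i<k. g (smp x i)) - real k * measure_pmf.expectation (\<mu> x) g\<bar> < \<epsilon>"
      and "\<bar>(\<Sum>i<k. g (smp x' i)) - real k * measure_pmf.expectation (\<mu> x') g\<bar> < \<epsilon>"
      using smp x g by blast+
    ultimately show False
      unfolding abs_less_iff \<epsilon>_def by linarith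
  qed
  moreover have "restrict (smp x) {..<k} \<in> PiE {..<k} (\<lambda>_. S)" if "x \<in> X" for x
    using smp[OF that] supp[OF that] by auto
  then have "(\<lambda>x. restrict (smp x) {..<k}) ` X \<subseteq> PiE {..<k} (\<lambda>_. S)"
    by blast
  ultimately have "card X \<le> card (PiE {..<k} (\<lambda>_. S :: 'a set))"
    using \<open>finite S\<close> by (intro card_inj_on_le finite_PiE) auto
  then show ?thesis
    by (simp add: card_PiE)
qed

lemma two_power_le_exp: "2 ^ m \<le> exp (real m)"
proof -
  have "(2::real) ^ m \<le> exp 1 ^ m"
    using exp_ge_add_one_self[of 1] by (intro power_mono) simp_all
  then show ?thesis
    by (simp add: exp_of_nat_mult[symmetric])
qed

lemma card_le_two_power_if_separated:
  fixes \<mu> :: "'x \<Rightarrow> 'a pmf" and G :: "('a \<Rightarrow> real) set"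
  assumes "finite G" and "2 * card G \<le> 2 ^ L" and "\<And>g s. g \<in> G \<Longrightarrow> g s \<in> {0..1}"
    and "finite S" and "card S \<le> 2 ^ c" and "\<And>x. x \<in> X \<Longrightarrow> set_pmf (\<mu> x) \<subseteq> S"
    and "\<And>x x'. x \<in> X \<Longrightarrow> x' \<in> X \<Longrightarrow> x \<noteq> x' \<Longrightarrow>
       \<exists>g\<in>G. measure_pmf.expectation (\<mu> x) g - measure_pmf.expectation (\<mu> x') g \<ge> 1/3"
  shows "card X \<le> 2 ^ (18 * c * (L + 1))"
proof -
  define k where "k = 18 * (L + 1)"
  have "real (2 * card G) \<le> real (2 ^ L)"
    using assms(2) by (simp only: of_nat_le_iff)
  also have "\<dots> \<le> exp (real L)"
    using two_power_le_exp by simp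
  finally have "real (2 * card G) * exp (- real (L + 1)) \<le> exp (real L) * exp (- real (L + 1))"
    by (rule mult_right_mono) simp
  also have "\<dots> < 1"
    by (simp flip: exp_add)
  also have "- real (L + 1) = - real k * (1/3)\<^sup>2 / 2"
    by (simp add: k_def power2_eq_square)
  finally have small: "2 * real (card G) * exp (- real k * (1/3)\<^sup>2 / 2) < 1"
    by simp
  have "card X \<le> card S ^ k"
    by (rule card_le_card_pow_if_separated[where \<delta> = "1/3"]) (fact assms small | simp add: k_def)+
  also have "\<dots> \<le> (2 ^ c) ^ k"
    using assms(5) by (rule power_mono) simp
  also have "\<dots> = 2 ^ (18 * c * (L + 1))"
    unfolding power_mult[symmetric] by (rule arg_cong[where f = "(^) 2"]) (simp add: k_def algebra_simps)
  finally show ?thesis .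
qed

section \<open>Runs of a verifier\<close>

lemma exec_append: "exec V (ps @ qs) s = bind_pmf (exec V ps s) (exec V qs)"
proof (induction ps arbitrary: s)
  case Nil
  then show ?case by (simp add: bind_return_pmf)
next
  case (Cons p ps)
  then have "exec V (ps @ qs) = (\<lambda>s. bind_pmf (exec V ps s) (exec V qs))"
    by (intro ext)
  then show ?case
    by (cases p) (simp add: bind_assoc_pmf)
qed

lemma set_pmf_read_bits_subset:
  assumes "\<forall>s\<in>S. \<forall>b. set_pmf (v_bit V s b) \<subseteq> S" and "s \<in> S"
  shows "set_pmf (read_bits V bs s) \<subseteq> S"
  using assms(2)
proof (induction bs arbitrary: s)
  case Nil
  then show ?case by simp
next
  case (Cons b bs)
  then show ?case
    using assms(1) by auto
qed

lemma set_pmf_exec_subset: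
  assumes "\<forall>s\<in>S. \<forall>b. set_pmf (v_bit V s b) \<subseteq> S"
    and "\<forall>s\<in>S. \<forall>x. valid_tok n x \<longrightarrow> set_pmf (v_tok V s x) \<subseteq> S"
    and "\<forall>p\<in>set ps. valid_tok n (fst p)" and "s \<in> S"
  shows "set_pmf (exec V ps s) \<subseteq> S"
  using assms(3,4)
proof (induction ps arbitrary: s)
  case Nil
  then show ?case by simp
next
  case (Cons p ps)
  obtain x a where p: "p = (x, a)"
    by (cases p)
  show ?case
  proof
    fix t assume "t \<in> set_pmf (exec V (p # ps) s)"
    then obtain s1 s2 where s1: "s1 \<in> set_pmf (v_tok V s x)"
      and s2: "s2 \<in> set_pmf (read_bits V a s1)" and t: "t \<in> set_pmf (exec V ps s2)"
      by (auto simp: p)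
    have "valid_tok n x"
      using Cons.prems(1) by (simp add: p)
    then have "s1 \<in> S"
      using assms(2) Cons.prems(2) s1 by blast
    then have "s2 \<in> S"
      using set_pmf_read_bits_subset[OF assms(1)] s2 by blast
    then show "t \<in> S"
      using Cons t by auto
  qed
qed

lemma length_honest [simp]: "length (honest h xs) = length xs"
  by (simp add: honest_def)

lemma take_honest: "take m (honest h xs) = honest h (take m xs)"
  by (rule nth_equalityI) (simp_all add: honest_def min_absorb1)

lemma honest_append: "honest h (xs @ ys) = honest h xs @ drop (length xs) (honest h (xs @ ys))"
  by (metis append_take_drop_id take_honest append_eq_conv_conj)

definition honest_state :: "verifier \<Rightarrow> (tok list \<Rightarrow> bool list) \<Rightarrow> tok list \<Rightarrow> nat pmf" where
  "honest_state V h xs = bind_pmf (v_init V) (exec V (zip xs (honest h xs)))"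

definition output_prob :: "verifier \<Rightarrow> tok list \<Rightarrow> bool list list \<Rightarrow> bool \<Rightarrow> nat \<Rightarrow> real" where
  "output_prob V ys hs b s = measure_pmf.prob (map_pmf (v_out V) (exec V (zip ys hs) s)) {Some b}"

lemma prob_run_out_append:
  assumes "length hs = length xs"
  shows "measure_pmf.prob (run_out V (xs @ ys) (hs @ hs')) {Some b} =
    measure_pmf.expectation (bind_pmf (v_init V) (exec V (zip xs hs))) (output_prob V ys hs' b)"
proof -
  have "run_out V (xs @ ys) (hs @ hs') = map_pmf (v_out V)
      (bind_pmf (v_init V) (\<lambda>s. bind_pmf (exec V (zip xs hs) s) (exec V (zip ys hs'))))"
    using assms by (simp add: run_out_def exec_append[abs_def])
  also have "\<dots> = bind_pmf (bind_pmf (v_init V) (exec V (zip xs hs)))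
      (\<lambda>s. map_pmf (v_out V) (exec V (zip ys hs') s))"
    by (simp only: bind_assoc_pmf map_bind_pmf)
  finally show ?thesis
    by (simp only: measure_pmf_single pmf_bind output_prob_def[abs_def])
qed

lemma set_pmf_honest_state_subset:
  assumes "online_scheme n F S cv ca h V" and "\<forall>t\<in>set xs. valid_tok n t"
  shows "set_pmf (honest_state V h xs) \<subseteq> S"
proof
  fix t assume "t \<in> set_pmf (honest_state V h xs)"
  then obtain s where s: "s \<in> set_pmf (v_init V)"
    and t: "t \<in> set_pmf (exec V (zip xs (honest h xs)) s)"
    by (auto simp: honest_state_def)
  have "\<forall>p\<in>set (zip xs (honest h xs)). valid_tok n (fst p)"
    using assms(2) by (auto dest: set_zip_leftD)
  moreover have "set_pmf (v_init V) \<subseteq> S"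
    and "\<forall>s\<in>S. \<forall>x. valid_tok n x \<longrightarrow> set_pmf (v_tok V s x) \<subseteq> S"
    and "\<forall>s\<in>S. \<forall>b. set_pmf (v_bit V s b) \<subseteq> S"
    using assms(1) unfolding online_scheme_def by auto
  ultimately show "t \<in> S"
    using set_pmf_exec_subset s t by blast
qed

definition annotations :: "nat \<Rightarrow> nat \<Rightarrow> bool list list set" where
  "annotations n c = {hs. length hs = n \<and> sum_list (map length hs) \<le> c}"

text \<open>The honest annotation of \<open>Q\<close> after \<open>P\<close> is also a legal annotation after \<open>P'\<close>:
  completeness bounds the first expectation from below, soundness the second from above.\<close>
lemma online_scheme_distinguishes:
  assumes scheme: "online_scheme n F S cv ca h V" and "length Q = n"
    and "promise n (P @ Q)" and "promise n (P' @ Q)" and "F (P @ Q) \<noteq> F (P' @ Q)"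
  obtains hQ where "hQ \<in> annotations n ca"
    and "measure_pmf.expectation (honest_state V h P) (output_prob V Q hQ (F (P @ Q)))
       - measure_pmf.expectation (honest_state V h P') (output_prob V Q hQ (F (P @ Q))) \<ge> 1/3"
proof
  define hQ where "hQ = drop (length P) (honest h (P @ Q))"
  have split: "honest h (P @ Q) = honest h P @ hQ"
    unfolding hQ_def by (rule honest_append)
  have "sum_list (map length (honest h (P @ Q))) \<le> ca"
    and complete: "measure_pmf.prob (run_out V (P @ Q) (honest h (P @ Q))) {Some (F (P @ Q))} \<ge> 2/3"
    using scheme assms(3) unfolding online_scheme_def by blast+
  moreover have "length (honest h P' @ hQ) = length (P' @ Q)"
    by (simp add: hQ_def)
  then have sound: "measure_pmf.prob (run_out V (P' @ Q) (honest h P' @ hQ))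
      (- {Some (F (P' @ Q)), None}) \<le> 1/3"
    using scheme assms(4) unfolding online_scheme_def by blast
  ultimately show "hQ \<in> annotations n ca"
    using assms(2) unfolding annotations_def split by (auto simp: hQ_def)
  have "measure_pmf.prob (run_out V (P' @ Q) (honest h P' @ hQ)) {Some (F (P @ Q))}
      \<le> measure_pmf.prob (run_out V (P' @ Q) (honest h P' @ hQ)) (- {Some (F (P' @ Q)), None})"
    using assms(5) by (intro measure_pmf.finite_measure_mono) auto
  with complete sound show "measure_pmf.expectation (honest_state V h P) (output_prob V Q hQ (F (P @ Q)))
      - measure_pmf.expectation (honest_state V h P') (output_prob V Q hQ (F (P @ Q))) \<ge> 1/3"
    unfolding split honest_state_def by (simp add: prob_run_out_append)
qed

fun self_delimiting :: "bool list \<Rightarrow> bool list" where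
  "self_delimiting [] = [False]"
| "self_delimiting (b # w) = True # b # self_delimiting w"

lemma self_delimiting_append_eq_iff:
  "self_delimiting w @ r = self_delimiting w' @ r' \<longleftrightarrow> w = w' \<and> r = r'"
proof (induction w arbitrary: w')
  case Nil
  then show ?case by (cases w') auto
next
  case (Cons b w)
  then show ?case by (cases w') auto
qed

lemma self_delimiting_ne_Nil: "self_delimiting w \<noteq> []"
  by (cases w) auto

lemma inj_concat_map_self_delimiting: "inj (\<lambda>hs. concat (map self_delimiting hs))"
proof (rule injI)
  fix hs hs' :: "bool list list"
  assume "concat (map self_delimiting hs) = concat (map self_delimiting hs')"
  then show "hs = hs'"
  proof (induction hs arbitrary: hs')
    case Nil
    then show ?case
      by (cases hs') (simp_all add: self_delimiting_ne_Nil)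
  next
    case (Cons w hs)
    then show ?case
      by (cases hs') (simp_all add: self_delimiting_ne_Nil self_delimiting_append_eq_iff)
  qed
qed

lemma length_self_delimiting: "length (self_delimiting w) = 2 * length w + 1"
  by (induction w) auto

lemma card_bool_lists_length_le: "card {xs :: bool list. length xs \<le> m} < 2 ^ Suc m"
proof -
  have "card {xs :: bool list. length xs \<le> m} = (\<Sum>i<Suc m. 2 ^ i)"
    using card_lists_length_le[of "UNIV :: bool set" m] by (simp add: lessThan_Suc_atMost)
  also have "\<dots> = 2 ^ Suc m - 1"
    using sum_power2[of "Suc m"] by (simp add: atLeast0LessThan)
  finally show ?thesis
    by simp
qed

lemma finite_annotations: "finite (annotations n c)"
  and card_annotations_le: "card (annotations n c) \<le> 2 ^ (2 * c + n + 1)"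
proof -
  let ?enc = "\<lambda>hs. concat (map self_delimiting hs)"
  have inj: "inj_on ?enc (annotations n c)"
    using inj_concat_map_self_delimiting by (rule inj_on_subset) simp
  have "length (?enc hs) = 2 * sum_list (map length hs) + length hs" for hs
    by (induction hs) (auto simp: length_self_delimiting)
  then have sub: "?enc ` annotations n c \<subseteq> {xs. length xs \<le> 2 * c + n}"
    by (auto simp: annotations_def)
  have fin: "finite {xs :: bool list. length xs \<le> 2 * c + n}"
    using finite_lists_length_le[of "UNIV :: bool set"] by simp
  show "finite (annotations n c)"
    using finite_subset[OF sub fin] inj by (simp add: finite_image_iff)
  have "card (annotations n c) \<le> card {xs :: bool list. length xs \<le> 2 * c + n}"
    using inj sub fin by (rule card_inj_on_le)
  also have "\<dots> \<le> 2 ^ (2 * c + n + 1)"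
    using card_bool_lists_length_le by (simp add: less_imp_le)
  finally show "card (annotations n c) \<le> 2 ^ (2 * c + n + 1)" .
qed

lemma online_scheme_fooling_set_card_le:
  fixes P :: "'x \<Rightarrow> tok list" and Qs :: "tok list set"
  assumes scheme: "online_scheme n F S cv ca h V"
    and "finite Qs" and "card Qs \<le> 2 ^ l" and len: "\<forall>Q\<in>Qs. length Q = n"
    and fool: "\<And>x x'. x \<in> X \<Longrightarrow> x' \<in> X \<Longrightarrow> x \<noteq> x' \<Longrightarrow>
       \<exists>Q\<in>Qs. promise n (P x @ Q) \<and> promise n (P x' @ Q) \<and> F (P x @ Q) \<noteq> F (P x' @ Q)"
  shows "card X \<le> 2 ^ (18 * cv * (l + 2 * ca + n + 4))"
proof (cases "\<exists>x. X \<subseteq> {x}")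
  case True
  then obtain x where "X \<subseteq> {x}"
    by blast
  then have "card X \<le> card {x}"
    by (intro card_mono) simp_all
  also have "\<dots> \<le> 2 ^ (18 * cv * (l + 2 * ca + n + 4))"
    by simp
  finally show ?thesis .
next
  case False
  define G where "G = (\<lambda>(Q, hQ, b). output_prob V Q hQ b) ` (Qs \<times> annotations n ca \<times> UNIV)"
  have "finite G"
    unfolding G_def using \<open>finite Qs\<close> finite_annotations by simp
  have "2 * card G \<le> 2 * (card Qs * (card (annotations n ca) * 2))"
    unfolding G_def using \<open>finite Qs\<close> finite_annotations
    by (intro mult_left_mono order.trans[OF card_image_le]) (simp_all add: card_cartesian_product)
  also have "\<dots> \<le> 2 * (2 ^ l * (2 ^ (2 * ca + n + 1) * 2))"
    using \<open>card Qs \<le> 2 ^ l\<close> card_annotations_le by (intro mult_mono) simp_all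
  also have "\<dots> = 2 ^ (l + 2 * ca + n + 3)"
    by (simp add: power_add)
  finally have card_G: "2 * card G \<le> 2 ^ (l + 2 * ca + n + 3)" .
  have supp: "set_pmf (honest_state V h (P x)) \<subseteq> S" if x: "x \<in> X" for x
  proof -
    obtain x' where "x' \<in> X" "x \<noteq> x'"
      using False x by blast
    then obtain Q where "promise n (P x @ Q)"
      using fool[OF x] by blast
    then show ?thesis
      using set_pmf_honest_state_subset[OF scheme] by (simp add: promise_def)
  qed
  have sep: "\<exists>g\<in>G. measure_pmf.expectation (honest_state V h (P x)) g
      - measure_pmf.expectation (honest_state V h (P x')) g \<ge> 1/3"
    if xx: "x \<in> X" "x' \<in> X" "x \<noteq> x'" for x x'
  proof -
    obtain Q where Q: "Q \<in> Qs" and px: "promise n (P x @ Q)" and px': "promise n (P x' @ Q)"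
      and differ: "F (P x @ Q) \<noteq> F (P x' @ Q)"
      using fool[OF xx] by blast
    obtain hQ where "hQ \<in> annotations n ca"
      and "measure_pmf.expectation (honest_state V h (P x)) (output_prob V Q hQ (F (P x @ Q)))
        - measure_pmf.expectation (honest_state V h (P x')) (output_prob V Q hQ (F (P x @ Q)))
        \<ge> 1/3"
      using online_scheme_distinguishes[OF scheme len[rule_format, OF Q] px px' differ] by blast
    moreover from this(1) have "output_prob V Q hQ (F (P x @ Q)) \<in> G"
      unfolding G_def using Q by (auto intro!: image_eqI[where x = "(Q, hQ, F (P x @ Q))"])
    ultimately show ?thesis
      by blast
  qed
  have S: "finite S" "card S \<le> 2 ^ cv"
    using scheme unfolding online_scheme_def by auto
  have bounds: "g s \<in> {0..1}" if "g \<in> G" for g s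
    using that by (auto simp: G_def output_prob_def)
  have "card X \<le> 2 ^ (18 * cv * (l + 2 * ca + n + 3 + 1))"
    by (rule card_le_two_power_if_separated[where \<mu> = "\<lambda>x. honest_state V h (P x)" and G = G])
      (fact \<open>finite G\<close> card_G bounds S supp sep)+
  moreover have "l + 2 * ca + n + 3 + 1 = l + 2 * ca + n + 4"
    by simp
  ultimately show ?thesis
    by (simp only:)
qed

section \<open>Graphs of XOR streams\<close>

definition ordered_tok :: "tok \<Rightarrow> bool" where
  "ordered_tok t = (fst t < snd t)"

lemma tok_edge_eq_doubleton_iff:
  assumes "ordered_tok t" and "u < v"
  shows "tok_edge t = {u, v} \<longleftrightarrow> t = (u, v)"
  using assms by (cases t) (auto simp: ordered_tok_def tok_edge_def doubleton_eq_iff)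

lemma doubleton_in_xor_edges_iff:
  assumes "\<forall>t\<in>set xs. ordered_tok t"
  shows "{u, v} \<in> xor_edges xs \<longleftrightarrow> odd (count_list xs (u, v)) \<or> odd (count_list xs (v, u))"
proof -
  have ordered: "{u, v} \<in> xor_edges xs \<longleftrightarrow> odd (count_list xs (u, v))" if "u < v" for u v
  proof -
    have "filter (\<lambda>t. tok_edge t = {u, v}) xs = filter ((=) (u, v)) xs"
      using assms that by (intro filter_cong) (auto simp: tok_edge_eq_doubleton_iff)
    then show ?thesis
      by (simp add: xor_edges_def count_list_eq_length_filter)
  qed
  have absent: "count_list xs (u, v) = 0" if "\<not> u < v" for u v
    using assms that by (auto simp: count_list_0_iff ordered_tok_def)
  have "{u} \<notin> xor_edges xs"
  proof -
    have "filter (\<lambda>t. tok_edge t = {u}) xs = []"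
      using assms by (auto simp: filter_empty_conv tok_edge_def ordered_tok_def doubleton_eq_iff)
    then show ?thesis
      by (simp add: xor_edges_def)
  qed
  then show ?thesis
    using ordered[of u v] ordered[of v u] absent[of u v] absent[of v u]
    by (cases u v rule: linorder_cases) (simp_all add: insert_commute)
qed

definition xor_adj :: "nat \<Rightarrow> tok list \<Rightarrow> nat rel" where
  "xor_adj n xs = {(a, b). a \<le> n \<and> b \<le> n \<and> {a, b} \<in> xor_edges xs}"

lemma connected_xor_iff_xor_adj: "connected_xor n xs \<longleftrightarrow> (\<forall>u\<le>n. \<forall>v\<le>n. (u, v) \<in> (xor_adj n xs)\<^sup>*)"
  by (simp add: connected_xor_def xor_adj_def)

lemma connected_xorI:
  assumes "c \<le> n" and reach: "\<And>u. u \<le> n \<Longrightarrow> (c, u) \<in> (xor_adj n xs)\<^sup>*"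
  shows "connected_xor n xs"
proof -
  have "sym ((xor_adj n xs)\<^sup>*)"
    by (intro sym_rtrancl) (auto simp: sym_def xor_adj_def insert_commute)
  then show ?thesis
    unfolding connected_xor_iff_xor_adj using reach[OF \<open>c \<le> n\<close>] reach
    by (meson rtrancl_trans symD)
qed

lemma not_connected_xorI:
  assumes "i \<le> n" and "c \<le> n" and "c \<noteq> i" and isolated: "\<And>u. u \<noteq> i \<Longrightarrow> {i, u} \<notin> xor_edges xs"
  shows "\<not> connected_xor n xs"
proof -
  have "y = i" if "(i, y) \<in> (xor_adj n xs)\<^sup>*" for y
    using that by induction (auto simp: xor_adj_def dest: isolated)
  then show ?thesis
    unfolding connected_xor_iff_xor_adj using assms(1-3) by blast
qed

lemma not_bipartite_xorI:
  assumes "{a, b} \<in> xor_edges xs" and "{b, c} \<in> xor_edges xs" and "{a, c} \<in> xor_edges xs"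
  shows "\<not> bipartite_xor n xs"
  using assms unfolding bipartite_xor_def by blast

definition list_of_set :: "'a set \<Rightarrow> 'a list" where
  "list_of_set A = (SOME xs. set xs = A \<and> distinct xs)"

lemma set_list_of_set [simp]: "finite A \<Longrightarrow> set (list_of_set A) = A"
  and distinct_list_of_set [simp]: "finite A \<Longrightarrow> distinct (list_of_set A)"
  unfolding list_of_set_def by (metis (mono_tags, lifting) finite_distinct_list someI_ex)+

lemma count_list_distinct: "distinct xs \<Longrightarrow> count_list xs x = (if x \<in> set xs then 1 else 0)"
  by (induction xs) auto

lemma count_list_replicate: "count_list (replicate k y) x = (if x = y then k else 0)"
  by (induction k) auto

text \<open>The copies of \<open>(0, i)\<close> pad the suffix to exactly \<open>n\<close> updates; their parity decides
  whether the edge \<open>{0, i}\<close> is toggled.\<close>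
definition toggle_suffix :: "nat \<Rightarrow> nat \<Rightarrow> nat set \<Rightarrow> tok list" where
  "toggle_suffix n i T = map (Pair i) (sorted_list_of_set T) @ replicate (n - card T) (0, i)"

lemma length_toggle_suffix: "finite T \<Longrightarrow> card T \<le> n \<Longrightarrow> length (toggle_suffix n i T) = n"
  by (simp add: toggle_suffix_def)

lemma odd_count_list_toggle_suffix:
  assumes "finite E" and "finite T" and "odd (n - card T)" and "0 < i"
  shows "odd (count_list (list_of_set E @ toggle_suffix n i T) t)
    \<longleftrightarrow> (t \<in> E) \<noteq> (t \<in> insert (0, i) (Pair i ` T))"
proof -
  have "distinct (map (Pair i) (sorted_list_of_set T))"
    by (simp add: distinct_map inj_on_def)
  then show ?thesis
    using assms by (auto simp: toggle_suffix_def count_list_distinct count_list_replicate)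
qed

lemma
  assumes "finite E" and E: "\<forall>t\<in>E. ordered_tok t \<and> snd t \<le> n"
    and "finite T" and T: "\<forall>v\<in>T. i < v \<and> v \<le> n" and "card T \<le> n" and "0 < i" and "i \<le> n"
  shows ordered_tok_toggle_instance: "\<forall>t\<in>set (list_of_set E @ toggle_suffix n i T). ordered_tok t"
    and promise_toggle_instance: "promise n (list_of_set E @ toggle_suffix n i T)"
proof -
  have suffix: "\<forall>t\<in>set (toggle_suffix n i T). ordered_tok t \<and> snd t \<le> n \<and> i \<in> tok_edge t"
    using T assms by (auto simp: toggle_suffix_def ordered_tok_def tok_edge_def)
  then show "\<forall>t\<in>set (list_of_set E @ toggle_suffix n i T). ordered_tok t"
    using E \<open>finite E\<close> by auto
  have "inj_on tok_edge E"
  proof (rule inj_onI)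
    fix s t assume "s \<in> E" "t \<in> E" "tok_edge s = tok_edge t"
    moreover have "ordered_tok s" "ordered_tok t"
      using E \<open>s \<in> E\<close> \<open>t \<in> E\<close> by auto
    ultimately show "s = t"
      using tok_edge_eq_doubleton_iff[of s "fst t" "snd t"] by (simp add: tok_edge_def ordered_tok_def)
  qed
  then have "distinct (map tok_edge (list_of_set E))"
    using \<open>finite E\<close> by (simp add: distinct_map)
  moreover have "\<forall>t\<in>set (list_of_set E @ toggle_suffix n i T). valid_tok n t"
    using E suffix \<open>finite E\<close> by (auto simp: valid_tok_def ordered_tok_def)
  ultimately show "promise n (list_of_set E @ toggle_suffix n i T)"
    using suffix \<open>i \<le> n\<close> length_toggle_suffix[OF \<open>finite T\<close> \<open>card T \<le> n\<close>]
    unfolding promise_def by auto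
qed

section \<open>The hard instances\<close>

locale hard_instances =
  fixes n :: nat
  assumes four_le_n: "4 \<le> n"
begin

definition side :: nat where
  "side = (n - 1) div 2"

definition lefts :: "nat set" where
  "lefts = {1..side}"

definition rights :: "nat set" where
  "rights = {side + 1..2 * side}"

definition pad :: nat where
  "pad = 2 * side + 1"

definition cols :: "nat set" where
  "cols = insert pad rights"

text \<open>Adding \<open>pad\<close> makes \<open>n - card (padded_row R)\<close> odd, so that the \<open>n\<close> suffix updates at a
  left vertex \<open>i\<close> toggle the edge \<open>{0, i}\<close>.\<close>
definition padded_row :: "nat set \<Rightarrow> nat set" where
  "padded_row R = (if even (card R + n) then insert pad R else R)"

definition prefix_edges :: "nat set \<Rightarrow> (nat \<Rightarrow> nat set) \<Rightarrow> tok set" where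
  "prefix_edges H x = Pair 0 ` H \<union> Sigma lefts (\<lambda>j. padded_row (x j))"

definition row_prefix :: "nat set \<Rightarrow> (nat \<Rightarrow> nat set) \<Rightarrow> tok list" where
  "row_prefix H x = list_of_set (prefix_edges H x)"

definition row_suffix :: "nat \<Rightarrow> nat set \<Rightarrow> tok list" where
  "row_suffix i R = toggle_suffix n i (padded_row R)"

definition choices :: "(nat \<Rightarrow> nat set) set" where
  "choices = PiE lefts (\<lambda>_. Pow rights)"

definition suffixes :: "tok list set" where
  "suffixes = (\<lambda>(i, R). row_suffix i R) ` (lefts \<times> Pow rights)"

lemma side_bounds: "n \<le> 4 * side" "pad \<le> n"
  using four_le_n unfolding side_def pad_def by presburger+

lemma cols_subset: "cols \<subseteq> {1..n}"
  using side_bounds by (auto simp: cols_def rights_def pad_def)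

lemma lefts_less_cols: "j \<in> lefts \<Longrightarrow> v \<in> cols \<Longrightarrow> 0 < j \<and> j < v \<and> v \<le> n"
  using side_bounds by (auto simp: lefts_def cols_def rights_def pad_def)

lemma lefts_le_n: "j \<in> lefts \<Longrightarrow> j \<le> n"
  using side_bounds by (auto simp: lefts_def pad_def)

lemma pad_notin_rights: "pad \<notin> rights"
  by (simp add: rights_def pad_def)

lemma choices_row: "x \<in> choices \<Longrightarrow> j \<in> lefts \<Longrightarrow> x j \<subseteq> rights"
  unfolding choices_def using PiE_mem by fastforce

lemma
  assumes "R \<subseteq> rights"
  shows padded_row_subset_cols: "padded_row R \<subseteq> cols"
    and finite_padded_row: "finite (padded_row R)"
    and card_padded_row_le: "card (padded_row R) \<le> n"
    and odd_diff_card_padded_row: "odd (n - card (padded_row R))"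
proof -
  show sub: "padded_row R \<subseteq> cols"
    using assms by (auto simp: padded_row_def cols_def)
  show "finite (padded_row R)"
    using finite_subset[OF sub] by (simp add: cols_def rights_def)
  have "card (padded_row R) \<le> card cols"
    using sub by (intro card_mono) (simp_all add: cols_def rights_def)
  also have "\<dots> \<le> n"
    using side_bounds pad_notin_rights by (simp add: cols_def rights_def pad_def)
  finally show le: "card (padded_row R) \<le> n" .
  have "finite R" and "pad \<notin> R"
    using assms finite_subset pad_notin_rights by (auto simp: rights_def)
  then have "odd (card (padded_row R) + n)"
    by (simp add: padded_row_def)
  then show "odd (n - card (padded_row R))"
    using le by simp
qed

lemma padded_row_inject:
  assumes "R \<subseteq> rights" and "R' \<subseteq> rights"
  shows "padded_row R = padded_row R' \<longleftrightarrow> R = R'"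
proof -
  have "padded_row R \<inter> rights = R" if "R \<subseteq> rights" for R
    using that pad_notin_rights by (auto simp: padded_row_def)
  then show ?thesis
    using assms by metis
qed

lemma finite_prefix_edges: "H \<subseteq> {1..n} \<Longrightarrow> x \<in> choices \<Longrightarrow> finite (prefix_edges H x)"
  using finite_subset finite_padded_row choices_row by (auto simp: prefix_edges_def lefts_def)

lemma odd_count_instance:
  assumes "H \<subseteq> {1..n}" and "x \<in> choices" and "i \<in> lefts" and "R \<subseteq> rights"
  shows "odd (count_list (row_prefix H x @ row_suffix i R) (p, q)) \<longleftrightarrow>
    p = 0 \<and> (q \<in> H) \<noteq> (q = i) \<or> p \<in> lefts \<and> p \<noteq> i \<and> q \<in> padded_row (x p) \<or>
    p = i \<and> (q \<in> padded_row (x i)) \<noteq> (q \<in> padded_row R)"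
proof -
  have "0 < i" "0 \<notin> lefts"
    using assms(3) by (auto simp: lefts_def)
  then have "odd (count_list (row_prefix H x @ row_suffix i R) (p, q)) \<longleftrightarrow>
      ((p, q) \<in> prefix_edges H x) \<noteq> ((p, q) \<in> insert (0, i) (Pair i ` padded_row R))"
    unfolding row_prefix_def row_suffix_def using assms
    by (intro odd_count_list_toggle_suffix finite_prefix_edges finite_padded_row
        odd_diff_card_padded_row)
  then show ?thesis
    using assms(3) \<open>0 \<notin> lefts\<close> by (auto simp: prefix_edges_def)
qed

lemma
  assumes "H \<subseteq> {1..n}" and "x \<in> choices" and "i \<in> lefts" and "R \<subseteq> rights"
  shows ordered_tok_instance: "\<forall>t\<in>set (row_prefix H x @ row_suffix i R). ordered_tok t"
    and promise_instance: "promise n (row_prefix H x @ row_suffix i R)"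
proof -
  have edges: "\<forall>t\<in>prefix_edges H x. ordered_tok t \<and> snd t \<le> n"
  proof
    fix t assume "t \<in> prefix_edges H x"
    then consider q where "t = (0, q)" "q \<in> H"
      | j v where "t = (j, v)" "j \<in> lefts" "v \<in> padded_row (x j)"
      by (auto simp: prefix_edges_def)
    then show "ordered_tok t \<and> snd t \<le> n"
    proof cases
      case 1
      then show ?thesis
        using assms(1) by (auto simp: ordered_tok_def)
    next
      case 2
      then show ?thesis
        using lefts_less_cols padded_row_subset_cols[OF choices_row[OF assms(2) 2(2)]]
        by (auto simp: ordered_tok_def)
    qed
  qed
  have row: "\<forall>v\<in>padded_row R. i < v \<and> v \<le> n"
    using assms(3,4) lefts_less_cols padded_row_subset_cols by blast
  have "0 < i" "i \<le> n"
    using assms(3) lefts_le_n by (auto simp: lefts_def)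
  note hyps = finite_prefix_edges[OF assms(1,2)] edges finite_padded_row[OF assms(4)] row
    card_padded_row_le[OF assms(4)] \<open>0 < i\<close> \<open>i \<le> n\<close>
  show "\<forall>t\<in>set (row_prefix H x @ row_suffix i R). ordered_tok t"
    unfolding row_prefix_def row_suffix_def by (rule ordered_tok_toggle_instance[OF hyps])
  show "promise n (row_prefix H x @ row_suffix i R)"
    unfolding row_prefix_def row_suffix_def by (rule promise_toggle_instance[OF hyps])
qed

lemma padded_rows_subset_cols: "x \<in> choices \<Longrightarrow> j \<in> lefts \<Longrightarrow> padded_row (x j) \<subseteq> cols"
  using padded_row_subset_cols choices_row by blast

lemma rows_differ_witness:
  assumes "x \<in> choices" and "i \<in> lefts" and "R \<subseteq> rights" and "x i \<noteq> R"
  obtains v where "v \<in> cols" and "(v \<in> padded_row (x i)) \<noteq> (v \<in> padded_row R)"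
  using assms padded_row_inject[OF choices_row[OF assms(1,2)] assms(3)]
    padded_row_subset_cols[OF choices_row[OF assms(1,2)]] padded_row_subset_cols[OF assms(3)]
  by blast

text \<open>With the full star at \<open>0\<close>, the suffix deletes \<open>{0, i}\<close>, so \<open>i\<close> stays connected exactly
  when its row was changed.\<close>
lemma connected_instance_iff:
  assumes "x \<in> choices" and "i \<in> lefts" and "R \<subseteq> rights"
  shows "connected_xor n (row_prefix {1..n} x @ row_suffix i R) \<longleftrightarrow> x i \<noteq> R"
proof -
  define xs where "xs = row_prefix {1..n} x @ row_suffix i R"
  have edge: "{u, v} \<in> xor_edges xs \<longleftrightarrow> odd (count_list xs (u, v)) \<or> odd (count_list xs (v, u))"
    for u v
    unfolding xs_def by (rule doubleton_in_xor_edges_iff[OF ordered_tok_instance[OF order.refl assms]])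
  have odd: "odd (count_list xs (p, q)) \<longleftrightarrow>
    p = 0 \<and> (q \<in> {1..n}) \<noteq> (q = i) \<or> p \<in> lefts \<and> p \<noteq> i \<and> q \<in> padded_row (x p) \<or>
    p = i \<and> (q \<in> padded_row (x i)) \<noteq> (q \<in> padded_row R)" for p q
    unfolding xs_def using assms by (intro odd_count_instance) simp_all
  have i: "0 < i" "i \<le> n" "i \<notin> cols"
    using assms(2) lefts_le_n lefts_less_cols by (auto simp: lefts_def)
  show ?thesis
  proof
    assume "connected_xor n (row_prefix {1..n} x @ row_suffix i R)"
    moreover have "{i, u} \<notin> xor_edges xs" if "x i = R" "u \<noteq> i" for u
      using that i padded_rows_subset_cols[OF assms(1)] by (auto simp: edge odd)
    ultimately show "x i \<noteq> R"
      using not_connected_xorI[of i n 0 xs] i unfolding xs_def by auto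
  next
    assume "x i \<noteq> R"
    then obtain v where v: "v \<in> cols" "(v \<in> padded_row (x i)) \<noteq> (v \<in> padded_row R)"
      using assms rows_differ_witness by blast
    then have "0 < v" "v \<le> n" "v \<noteq> i"
      using assms(2) lefts_less_cols by fastforce+
    have hub: "(0, u) \<in> xor_adj n xs" if "0 < u" "u \<le> n" "u \<noteq> i" for u
      using that by (auto simp: xor_adj_def edge odd)
    have "(0, v) \<in> xor_adj n xs" "(v, i) \<in> xor_adj n xs"
      using hub \<open>0 < v\<close> \<open>v \<le> n\<close> \<open>v \<noteq> i\<close> v i by (auto simp: xor_adj_def edge odd)
    then have "(0, u) \<in> (xor_adj n xs)\<^sup>*" if "u \<le> n" for u
      using hub that by (cases "u = 0 \<or> u = i") (auto intro: rtrancl_into_rtrancl)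
    then show "connected_xor n (row_prefix {1..n} x @ row_suffix i R)"
      unfolding xs_def[symmetric] by (intro connected_xorI[of 0]) simp_all
  qed
qed

text \<open>With the star from \<open>0\<close> to \<open>cols\<close> only, the suffix adds the edge \<open>{0, i}\<close>: an unchanged
  row keeps the graph bipartite, a changed one closes a triangle.\<close>
lemma bipartite_instance_iff:
  assumes "x \<in> choices" and "i \<in> lefts" and "R \<subseteq> rights"
  shows "bipartite_xor n (row_prefix cols x @ row_suffix i R) \<longleftrightarrow> x i = R"
proof -
  define xs where "xs = row_prefix cols x @ row_suffix i R"
  have edge: "{u, v} \<in> xor_edges xs \<longleftrightarrow> odd (count_list xs (u, v)) \<or> odd (count_list xs (v, u))"
    for u v
    unfolding xs_def by (rule doubleton_in_xor_edges_iff[OF ordered_tok_instance[OF cols_subset assms]])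
  have odd: "odd (count_list xs (p, q)) \<longleftrightarrow>
    p = 0 \<and> (q \<in> cols) \<noteq> (q = i) \<or> p \<in> lefts \<and> p \<noteq> i \<and> q \<in> padded_row (x p) \<or>
    p = i \<and> (q \<in> padded_row (x i)) \<noteq> (q \<in> padded_row R)" for p q
    unfolding xs_def using assms cols_subset by (intro odd_count_instance) simp_all
  have i: "0 < i" "i \<notin> cols"
    using assms(2) lefts_less_cols by (auto simp: lefts_def)
  have lefts_cols: "0 \<notin> cols" "j \<notin> cols" if "j \<in> lefts" for j
    using that lefts_less_cols by blast+
  show ?thesis
  proof
    assume "bipartite_xor n (row_prefix cols x @ row_suffix i R)"
    show "x i = R"
    proof (rule ccontr)
      assume "x i \<noteq> R"
      then obtain v where v: "v \<in> cols" "(v \<in> padded_row (x i)) \<noteq> (v \<in> padded_row R)"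
        using assms rows_differ_witness by blast
      then have "{0, i} \<in> xor_edges xs" "{i, v} \<in> xor_edges xs" "{0, v} \<in> xor_edges xs"
        using i by (auto simp: edge odd)
      then show False
        using \<open>bipartite_xor n _\<close> not_bipartite_xorI unfolding xs_def by blast
    qed
  next
    assume "x i = R"
    define colour where "colour u = (u \<in> cols \<or> u = i)" for u
    have "colour p \<noteq> colour q" if "odd (count_list xs (p, q))" for p q
      using that \<open>x i = R\<close> i assms(2) lefts_cols padded_rows_subset_cols[OF assms(1)]
      by (auto simp: odd colour_def)
    then show "bipartite_xor n (row_prefix cols x @ row_suffix i R)"
      unfolding bipartite_xor_def xs_def[symmetric] by (metis edge)
  qed
qed

lemma card_choices: "card choices = 2 ^ (side * side)"
  by (simp add: choices_def card_PiE lefts_def rights_def card_Pow power_mult)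

lemma finite_suffixes: "finite suffixes"
  by (simp add: suffixes_def lefts_def rights_def)

lemma card_suffixes_le: "card suffixes \<le> 2 ^ (2 * side)"
proof -
  have "card suffixes \<le> card (lefts \<times> Pow rights)"
    unfolding suffixes_def by (rule card_image_le) (simp add: lefts_def rights_def)
  also have "\<dots> = side * 2 ^ side"
    by (simp add: card_cartesian_product lefts_def rights_def card_Pow)
  also have "\<dots> \<le> 2 ^ side * 2 ^ side"
    by (simp add: less_imp_le)
  finally show ?thesis
    by (simp add: mult_2 power_add)
qed

lemma length_suffixes: "\<forall>Q\<in>suffixes. length Q = n"
  by (auto simp: suffixes_def row_suffix_def length_toggle_suffix finite_padded_row
      card_padded_row_le)

lemma online_scheme_lower_bound:
  assumes F: "F = connected_xor n \<or> F = bipartite_xor n"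
    and scheme: "online_scheme n F S cv ca h V"
  shows "n * n \<le> 1152 * ((ca + n) * cv)"
proof -
  obtain H b where "H \<subseteq> {1..n}" and decides: "\<And>x i R. x \<in> choices \<Longrightarrow> i \<in> lefts \<Longrightarrow>
      R \<subseteq> rights \<Longrightarrow> F (row_prefix H x @ row_suffix i R) = ((x i = R) = b)"
  proof (cases "F = connected_xor n")
    case True
    show ?thesis
      by (rule that[of "{1..n}" False]) (use True connected_instance_iff in auto)
  next
    case False
    then have "F = bipartite_xor n"
      using F by blast
    show ?thesis
      by (rule that[of cols True])
        (use \<open>F = bipartite_xor n\<close> bipartite_instance_iff cols_subset in auto)
  qed
  have fool: "\<exists>Q\<in>suffixes. promise n (row_prefix H x @ Q) \<and> promise n (row_prefix H x' @ Q) \<and>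
      F (row_prefix H x @ Q) \<noteq> F (row_prefix H x' @ Q)"
    if x: "x \<in> choices" and x': "x' \<in> choices" and "x \<noteq> x'" for x x'
  proof -
    have "\<exists>i\<in>lefts. x i \<noteq> x' i"
      using x x' \<open>x \<noteq> x'\<close> PiE_ext unfolding choices_def by blast
    then obtain i where i: "i \<in> lefts" "x i \<noteq> x' i"
      by blast
    then have row: "x i \<subseteq> rights"
      using choices_row x by blast
    have "row_suffix i (x i) \<in> suffixes"
      using i row by (auto simp: suffixes_def)
    moreover have "promise n (row_prefix H x @ row_suffix i (x i))"
      and "promise n (row_prefix H x' @ row_suffix i (x i))"
      using promise_instance \<open>H \<subseteq> {1..n}\<close> x x' i(1) row by blast+
    moreover have "F (row_prefix H x @ row_suffix i (x i)) \<noteq> F (row_prefix H x' @ row_suffix i (x i))"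
      using decides[OF x i(1) row] decides[OF x' i(1) row] i(2) by auto
    ultimately show ?thesis
      by blast
  qed
  have "card choices \<le> 2 ^ (18 * cv * (2 * side + 2 * ca + n + 4))"
    by (rule online_scheme_fooling_set_card_le[where P = "row_prefix H",
        OF scheme finite_suffixes card_suffixes_le length_suffixes fool])
  then have "side * side \<le> 18 * cv * (2 * side + 2 * ca + n + 4)"
    unfolding card_choices by (rule power_le_imp_le_exp[rotated]) simp
  also have "\<dots> \<le> 18 * cv * (4 * (ca + n))"
    using side_bounds by (intro mult_left_mono) (auto simp: pad_def)
  also have "\<dots> = 72 * ((ca + n) * cv)"
    by (simp add: algebra_simps)
  finally have "side * side \<le> 72 * ((ca + n) * cv)" .
  moreover have "n * n \<le> 16 * (side * side)"
    using mult_le_mono[OF side_bounds(1) side_bounds(1)] by simp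
  ultimately show ?thesis
    by linarith
qed

end

lemma le_mult_add_if_square_le:
  fixes n a v c :: nat
  assumes "n * n \<le> c * ((a + n) * v)"
  shows "n \<le> 2 * c * (a + v)"
proof (cases "n \<le> a")
  case True
  show ?thesis
  proof (cases "c = 0")
    case True
    then show ?thesis
      using assms by simp
  next
    case False
    then have "a + v \<le> 2 * c * (a + v)"
      using mult_right_mono[of 1 "2 * c" "a + v"] by simp
    then show ?thesis
      using \<open>n \<le> a\<close> by (meson le_add1 le_trans)
  qed
next
  case False
  have "n * n \<le> c * ((a + n) * v)"
    by (rule assms)
  also have "\<dots> \<le> c * (2 * n * v)"
    using False by (intro mult_left_mono mult_right_mono) simp_all
  also have "\<dots> = n * (2 * c * v)"
    by simp
  finally have "n \<le> 2 * c * v"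
    by (cases "n = 0") simp_all
  then show ?thesis
    by (simp add: add_mult_distrib2 trans_le_add2)
qed

theorem corollary4p2:
  shows "\<exists>C>0. \<exists>N. \<forall>n\<ge>N. \<forall>F S cv ca h V.
     (F = connected_xor n \<or> F = bipartite_xor n) \<longrightarrow>
     online_scheme n F S cv ca h V \<longrightarrow>
       real ((ca + n) * cv) \<ge> C * real n ^ 2 \<and> real (ca + cv) \<ge> C * real n"
proof (intro exI[of _ "1/2304"] conjI exI[of _ 4] allI impI)
  fix n F S cv ca h V
  assume "4 \<le> n" and "F = connected_xor n \<or> F = bipartite_xor n"
    and "online_scheme n F S cv ca h V"
  then have square: "n * n \<le> 1152 * ((ca + n) * cv)"
    by (intro hard_instances.online_scheme_lower_bound) (unfold_locales)
  then have "real n ^ 2 \<le> 1152 * real ((ca + n) * cv)"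
    by (simp add: power2_eq_square flip: of_nat_mult)
  then show "real ((ca + n) * cv) \<ge> 1/2304 * real n ^ 2"
    using of_nat_0_le_iff[of "(ca + n) * cv"] by linarith
  have "n \<le> 2304 * (ca + cv)"
    using le_mult_add_if_square_le[OF square] by simp
  then show "real (ca + cv) \<ge> 1/2304 * real n"
    by simp
qed simp

end
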